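(* Let $\mathcal B$ be any board, let $q'>q>0$ be integers, and let $\mathsf P$ and $\mathsf P'$ be rider pieces such that every basic move of $\mathsf P$ is also a basic move of $\mathsf P'$. Then $D_q(\mathsf P)\mid D_{q'}(\mathsf P)$ and $D_q(\mathsf P)\mid D_q(\mathsf P')$.
   Context: A board $\mathcal B$ is a convex polygon in $\mathbb R^2$ with rational corners. A rider piece $\mathsf P$ has a finite set $\mathcal M$ of basic moves: nonzero integer vectors $(c,d)$ with $\gcd(c,d)=1$, no two parallel. For $q$ pieces, the move arrangement $\mathcal A^q_{\mathsf P}$ in $\mathbb R^{2q}$ consists of the hyperplanes $\mathcal H^{d/c}_{ij}=\{(z_1,\dots,z_q):(z_j-z_i)\cdot(d,-c)=0\}$, $1\le i<j\le q$, $(c,d)\in\mathcal M$. A vertex of the inside-out polytope $(\mathcal B^q,\mathcal A^q_{\mathsf P})$ is a point of $\mathcal B^q$ that is the unique point of an intersection of some hyperplanes of $\mathcal A^q_{\mathsf P}$ and some affine hulls of facets of $\mathcal B^q$. The denominator $D_q(\mathsf P)=D(\mathcal B^q,\mathcal A^q_{\mathsf P})$ is the least common multiple of the least common denominators of the coordinates of all such vertices. *)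

theory Defs
  imports "HOL-Analysis.Analysis"
begin

definition board :: "(real \<times> real) set \<Rightarrow> bool" where
  "board B \<longleftrightarrow> (\<exists>V. finite V \<and> (\<forall>v\<in>V. fst v \<in> \<rat> \<and> snd v \<in> \<rat>)
                  \<and> B = convex hull V) \<and> interior B \<noteq> {}"

definition rider_moves :: "(int \<times> int) set \<Rightarrow> bool" where
  "rider_moves M \<longleftrightarrow> finite M \<and>
     (\<forall>(c,d)\<in>M. (c,d) \<noteq> (0,0) \<and> gcd c d = 1) \<and>
     (\<forall>(c,d)\<in>M. \<forall>(c',d')\<in>M. (c,d) \<noteq> (c',d') \<longrightarrow> c * d' \<noteq> c' * d)"

(* Points of \<real>^2^q: configurations z with z i \<in> \<real>^2 for i < q, extended by 0. *)
definition config_space :: "nat \<Rightarrow> (nat \<Rightarrow> real \<times> real) set" where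
  "config_space q = {z. \<forall>i\<ge>q. z i = (0,0)}"

definition board_power :: "(real \<times> real) set \<Rightarrow> nat \<Rightarrow> (nat \<Rightarrow> real \<times> real) set" where
  "board_power B q = {z \<in> config_space q. \<forall>i<q. z i \<in> B}"

definition move_hyperplane :: "nat \<Rightarrow> (nat \<times> nat \<times> (int \<times> int)) \<Rightarrow> (nat \<Rightarrow> real \<times> real) set" where
  "move_hyperplane q h = (case h of (i, j, (c, d)) \<Rightarrow>
     {z \<in> config_space q. (fst (z j) - fst (z i)) * of_int d - (snd (z j) - snd (z i)) * of_int c = 0})"

definition arrangement_index :: "(int \<times> int) set \<Rightarrow> nat \<Rightarrow> (nat \<times> nat \<times> (int \<times> int)) set" where
  "arrangement_index M q = {(i, j, m). i < j \<and> j < q \<and> m \<in> M}"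

(* Affine hulls of facets of B^q: the facets of B^q are the sets where one factor
  z_i lies in a facet F (edge) of B, so their affine hulls are {z. z_i \<in> aff F}. *)
definition facet_hull :: "nat \<Rightarrow> (nat \<times> (real \<times> real) set) \<Rightarrow> (nat \<Rightarrow> real \<times> real) set" where
  "facet_hull q f = (case f of (i, F) \<Rightarrow> {z \<in> config_space q. z i \<in> affine hull F})"

definition facet_index :: "(real \<times> real) set \<Rightarrow> nat \<Rightarrow> (nat \<times> (real \<times> real) set) set" where
  "facet_index B q = {(i, F). i < q \<and> F facet_of B}"

definition iop_vertex :: "(real \<times> real) set \<Rightarrow> (int \<times> int) set \<Rightarrow> nat \<Rightarrow> (nat \<Rightarrow> real \<times> real) \<Rightarrow> bool" where
  "iop_vertex B M q z \<longleftrightarrow> z \<in> board_power B q \<and>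
     (\<exists>Hs Fs. Hs \<subseteq> arrangement_index M q \<and> Fs \<subseteq> facet_index B q \<and>
        config_space q \<inter> (\<Inter>h\<in>Hs. move_hyperplane q h) \<inter> (\<Inter>f\<in>Fs. facet_hull q f) = {z})"

definition coord_lcd :: "nat \<Rightarrow> (nat \<Rightarrow> real \<times> real) \<Rightarrow> nat" where
  "coord_lcd q z = (LEAST d::nat. d > 0 \<and>
     (\<forall>i<q. real d * fst (z i) \<in> \<int> \<and> real d * snd (z i) \<in> \<int>))"

definition denom :: "(real \<times> real) set \<Rightarrow> (int \<times> int) set \<Rightarrow> nat \<Rightarrow> nat" where
  "denom B M q = Lcm {coord_lcd q z | z. iop_vertex B M q z}"

end

theory Submission
  imports Defs
begin

text \<open>Enlarging the set of moves only enlarges the set of hyperplanes a vertex may be cut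
  out by, so every vertex for \<open>\<P>\<close> is one for \<open>\<P>'\<close>. For more pieces, place every additional
  piece on top of piece 0 and copy to it each constraint involving piece 0. Any solution of the
  enlarged system, restricted to the first \<open>q\<close> pieces with piece 0 replaced by any piece
  \<open>j \<ge> q\<close>, solves the original system; hence the solution is unique, and it is a vertex whose
  coordinates, and so whose denominator, are those of the original vertex. Neither the shape of
  the board nor the conditions on the moves play any role.\<close>

definition parallel_to_move :: "real \<times> real \<Rightarrow> int \<times> int \<Rightarrow> bool" where
  "parallel_to_move v m = (case m of (c, d) \<Rightarrow> fst v * of_int d - snd v * of_int c = 0)"

lemma parallel_to_move_diff_commute:
  "parallel_to_move (a - b) m \<longleftrightarrow> parallel_to_move (b - a) m"
  by (auto simp: parallel_to_move_def algebra_simps split: prod.split)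

lemma move_hyperplane_eq:
  "move_hyperplane q (i, j, m) = {z \<in> config_space q. parallel_to_move (z j - z i) m}"
  by (auto simp: move_hyperplane_def parallel_to_move_def split: prod.split)

definition flat ::
  "nat \<Rightarrow> (nat \<times> nat \<times> (int \<times> int)) set \<Rightarrow> (nat \<times> (real \<times> real) set) set
     \<Rightarrow> (nat \<Rightarrow> real \<times> real) set" where
  "flat q Hs Fs = config_space q \<inter> (\<Inter>h\<in>Hs. move_hyperplane q h) \<inter> (\<Inter>f\<in>Fs. facet_hull q f)"

lemma mem_flat:
  "z \<in> flat q Hs Fs \<longleftrightarrow> z \<in> config_space q \<and>
     (\<forall>(i, j, m)\<in>Hs. parallel_to_move (z j - z i) m) \<and> (\<forall>(i, F)\<in>Fs. z i \<in> affine hull F)"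
  by (auto simp: flat_def move_hyperplane_eq facet_hull_def)

lemma iop_vertex_iff_flat:
  "iop_vertex B M q z \<longleftrightarrow> z \<in> board_power B q \<and>
     (\<exists>Hs Fs. Hs \<subseteq> arrangement_index M q \<and> Fs \<subseteq> facet_index B q \<and> flat q Hs Fs = {z})"
  by (simp add: iop_vertex_def flat_def)

lemma iop_vertex_mono_moves:
  assumes "M \<subseteq> M'" and "iop_vertex B M q z"
  shows "iop_vertex B M' q z"
proof -
  have "arrangement_index M q \<subseteq> arrangement_index M' q"
    using assms(1) by (auto simp: arrangement_index_def)
  with assms(2) show ?thesis
    unfolding iop_vertex_iff_flat by (meson order.trans)
qed

lemma denom_dvd_denom_mono_moves:
  assumes "M \<subseteq> M'"
  shows "denom B M q dvd denom B M' q"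
  unfolding denom_def
  by (rule Lcm_subset) (use iop_vertex_mono_moves[OF assms] in blast)

definition duplicate_first :: "nat \<Rightarrow> nat \<Rightarrow> (nat \<Rightarrow> real \<times> real) \<Rightarrow> nat \<Rightarrow> real \<times> real" where
  "duplicate_first q q' z = (\<lambda>i. if i < q then z i else if i < q' then z 0 else (0, 0))"

text \<open>A constraint \<open>(0, k, m)\<close> is copied as \<open>(k, j, m)\<close>, since hyperplane indices increase.\<close>

definition duplicate_first_moves ::
  "nat \<Rightarrow> nat \<Rightarrow> (nat \<times> nat \<times> (int \<times> int)) set \<Rightarrow> (nat \<times> nat \<times> (int \<times> int)) set" where
  "duplicate_first_moves q q' Hs =
     Hs \<union> {(k, j, m) | k j m. (0, k, m) \<in> Hs \<and> q \<le> j \<and> j < q'}"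

definition duplicate_first_facets ::
  "nat \<Rightarrow> nat \<Rightarrow> (nat \<times> (real \<times> real) set) set \<Rightarrow> (nat \<times> (real \<times> real) set) set" where
  "duplicate_first_facets q q' Fs = Fs \<union> {(j, F) | j F. (0, F) \<in> Fs \<and> q \<le> j \<and> j < q'}"

definition substitute_first :: "nat \<Rightarrow> (nat \<Rightarrow> real \<times> real) \<Rightarrow> nat \<Rightarrow> nat \<Rightarrow> real \<times> real" where
  "substitute_first q w j = (\<lambda>i. if i = 0 then w j else if i < q then w i else (0, 0))"

lemma duplicate_first_moves_subset:
  assumes "Hs \<subseteq> arrangement_index M q" and "q \<le> q'"
  shows "duplicate_first_moves q q' Hs \<subseteq> arrangement_index M q'"
  using assms by (fastforce simp: duplicate_first_moves_def arrangement_index_def)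

lemma duplicate_first_facets_subset:
  assumes "Fs \<subseteq> facet_index B q" and "q \<le> q'"
  shows "duplicate_first_facets q q' Fs \<subseteq> facet_index B q'"
  using assms by (auto simp: duplicate_first_facets_def facet_index_def)

lemma duplicate_first_in_board_power:
  assumes "z \<in> board_power B q" and "0 < q" and "q \<le> q'"
  shows "duplicate_first q q' z \<in> board_power B q'"
  using assms by (auto simp: board_power_def config_space_def duplicate_first_def)

lemma duplicate_first_in_flat:
  assumes "z \<in> flat q Hs Fs" and "Hs \<subseteq> arrangement_index M q" and "Fs \<subseteq> facet_index B q"
    and "q \<le> q'"
  shows "duplicate_first q q' z
    \<in> flat q' (duplicate_first_moves q q' Hs) (duplicate_first_facets q q' Fs)"
proof -
  let ?z' = "duplicate_first q q' z"
  have moves: "parallel_to_move (z k - z i) m" if "(i, k, m) \<in> Hs" for i k m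
    using assms(1) that by (auto simp: mem_flat)
  have bounds: "i < k \<and> k < q" if "(i, k, m) \<in> Hs" for i k m
    using assms(2) that by (auto simp: arrangement_index_def)
  have "parallel_to_move (?z' j - ?z' k) m" if "(k, j, m) \<in> duplicate_first_moves q q' Hs" for k j m
  proof (cases "(k, j, m) \<in> Hs")
    case True
    with bounds[OF True] moves[OF True] show ?thesis
      by (simp add: duplicate_first_def)
  next
    case False
    with that have "(0, k, m) \<in> Hs" "q \<le> j" "j < q'"
      by (auto simp: duplicate_first_moves_def)
    moreover from bounds[OF this(1)] this have "?z' j - ?z' k = z 0 - z k"
      by (simp add: duplicate_first_def)
    ultimately show ?thesis
      using moves parallel_to_move_diff_commute by metis
  qed
  moreover have "?z' i \<in> affine hull F" if "(i, F) \<in> duplicate_first_facets q q' Fs" for i F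
    using that assms(1,3) by (auto simp: duplicate_first_facets_def duplicate_first_def
        mem_flat facet_index_def)
  moreover have "?z' \<in> config_space q'"
    using assms(4) by (auto simp: config_space_def duplicate_first_def)
  ultimately show ?thesis
    by (auto simp: mem_flat)
qed

lemma substitute_first_in_flat:
  assumes "w \<in> flat q' (duplicate_first_moves q q' Hs) (duplicate_first_facets q q' Fs)"
    and "Hs \<subseteq> arrangement_index M q" and "Fs \<subseteq> facet_index B q" and "0 < q"
    and "j = 0 \<or> q \<le> j \<and> j < q'"
  shows "substitute_first q w j \<in> flat q Hs Fs"
proof -
  let ?v = "substitute_first q w j"
  have moves: "parallel_to_move (w k - w i) m"
    if "(i, k, m) \<in> duplicate_first_moves q q' Hs" for i k m
    using assms(1) that by (auto simp: mem_flat)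
  have facets: "w i \<in> affine hull F" if "(i, F) \<in> duplicate_first_facets q q' Fs" for i F
    using assms(1) that by (auto simp: mem_flat)
  have "parallel_to_move (?v k - ?v i) m" if "(i, k, m) \<in> Hs" for i k m
  proof -
    from that assms(2) have "i < k" "k < q"
      by (auto simp: arrangement_index_def)
    show ?thesis
    proof (cases "i = 0 \<and> j \<noteq> 0")
      case True
      with that assms(5) have "(0, k, m) \<in> Hs" "q \<le> j" "j < q'"
        by auto
      then have "(k, j, m) \<in> duplicate_first_moves q q' Hs"
        unfolding duplicate_first_moves_def by blast
      moreover have "?v k - ?v i = w k - w j"
        using True \<open>i < k\<close> \<open>k < q\<close> by (simp add: substitute_first_def)
      ultimately show ?thesis
        using moves parallel_to_move_diff_commute by metis
    next
      case False
      have "(i, k, m) \<in> duplicate_first_moves q q' Hs"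
        using that by (simp add: duplicate_first_moves_def)
      moreover have "?v k - ?v i = w k - w i"
        using False \<open>i < k\<close> \<open>k < q\<close> by (auto simp: substitute_first_def)
      ultimately show ?thesis
        using moves by simp
    qed
  qed
  moreover have "?v i \<in> affine hull F" if "(i, F) \<in> Fs" for i F
    using that assms(3,5) facets
    by (auto simp: substitute_first_def duplicate_first_facets_def facet_index_def)
  moreover have "?v \<in> config_space q"
    using assms(4) by (auto simp: config_space_def substitute_first_def)
  ultimately show ?thesis
    by (auto simp: mem_flat)
qed

lemma flat_duplicate_first_eq:
  assumes "flat q Hs Fs = {z}" and "Hs \<subseteq> arrangement_index M q" and "Fs \<subseteq> facet_index B q"
    and "0 < q" and "q \<le> q'"
  shows "flat q' (duplicate_first_moves q q' Hs) (duplicate_first_facets q q' Fs)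
    = {duplicate_first q q' z}"
proof
  show "{duplicate_first q q' z}
      \<subseteq> flat q' (duplicate_first_moves q q' Hs) (duplicate_first_facets q q' Fs)"
    using duplicate_first_in_flat assms by blast
next
  show "flat q' (duplicate_first_moves q q' Hs) (duplicate_first_facets q q' Fs)
      \<subseteq> {duplicate_first q q' z}"
  proof
    fix w
    assume w: "w \<in> flat q' (duplicate_first_moves q q' Hs) (duplicate_first_facets q q' Fs)"
    have substitute: "substitute_first q w j = z" if "j = 0 \<or> q \<le> j \<and> j < q'" for j
      using substitute_first_in_flat[OF w assms(2-4) that] assms(1) by blast
    have "w i = duplicate_first q q' z i" for i
    proof -
      consider "i < q" | "q \<le> i" "i < q'" | "q' \<le> i"
        by linarith
      then show ?thesis
      proof cases
        case 1
        then show ?thesis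
          using fun_cong[OF substitute[of 0], of i]
          by (auto simp: substitute_first_def duplicate_first_def split: if_splits)
      next
        case 2
        then show ?thesis
          using fun_cong[OF substitute[of i], of 0]
          by (simp add: substitute_first_def duplicate_first_def)
      next
        case 3
        then show ?thesis
          using w assms(5) by (simp add: mem_flat config_space_def duplicate_first_def)
      qed
    qed
    then show "w \<in> {duplicate_first q q' z}"
      by auto
  qed
qed

lemma iop_vertex_duplicate_first:
  assumes "iop_vertex B M q z" and "0 < q" and "q \<le> q'"
  shows "iop_vertex B M q' (duplicate_first q q' z)"
proof -
  from assms(1) obtain Hs Fs where "z \<in> board_power B q" "Hs \<subseteq> arrangement_index M q"
      "Fs \<subseteq> facet_index B q" "flat q Hs Fs = {z}"
    unfolding iop_vertex_iff_flat by blast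
  with assms(2,3) show ?thesis
    unfolding iop_vertex_iff_flat
    by (metis duplicate_first_in_board_power duplicate_first_moves_subset
        duplicate_first_facets_subset flat_duplicate_first_eq)
qed

lemma coord_lcd_duplicate_first:
  assumes "0 < q" and "q \<le> q'"
  shows "coord_lcd q' (duplicate_first q q' z) = coord_lcd q z"
proof -
  have "(\<forall>i<q'. P (duplicate_first q q' z i)) \<longleftrightarrow> (\<forall>i<q. P (z i))" for P
    using assms by (auto simp: duplicate_first_def)
  from this[of "\<lambda>x. real d * fst x \<in> \<int> \<and> real d * snd x \<in> \<int>" for d]
  show ?thesis
    unfolding coord_lcd_def by simp
qed

lemma denom_dvd_denom_more_pieces:
  assumes "0 < q" and "q \<le> q'"
  shows "denom B M q dvd denom B M q'"
  unfolding denom_def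
proof (rule Lcm_subset, rule subsetI)
  fix n
  assume "n \<in> {coord_lcd q z |z. iop_vertex B M q z}"
  then obtain z where "n = coord_lcd q z" and "iop_vertex B M q z"
    by blast
  with assms have "n = coord_lcd q' (duplicate_first q q' z)"
    and "iop_vertex B M q' (duplicate_first q q' z)"
    by (simp_all add: coord_lcd_duplicate_first iop_vertex_duplicate_first)
  then show "n \<in> {coord_lcd q' z |z. iop_vertex B M q' z}"
    by blast
qed

theorem proposition3p2:
  fixes B :: "(real \<times> real) set" and M M' :: "(int \<times> int) set" and q q' :: nat
  assumes "board B" and "rider_moves M" and "rider_moves M'" and "M \<subseteq> M'"
    and "0 < q" and "q < q'"
  shows "denom B M q dvd denom B M q' \<and> denom B M q dvd denom B M' q"
  using assms(4-6) denom_dvd_denom_more_pieces denom_dvd_denom_mono_moves by simp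

end
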